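(* Let $G$ be a bipartite permutation graph with a transitive vertex ordering $<$ and let $e,e'\in E(G)$ with $l(e)<l(e')$. (a) If $r(e)<l(e')$, then $\{e,e'\}$ is a uniquely restricted matching in $G$. (b) If $l(e')<r(e)<r(e')$, then $\{e,e'\}$ is a uniquely restricted matching in $G$ if and only if $l(e)r(e')\notin E(G)$. (c) If $r(e')<r(e)$, then $\{e,e'\}$ is not a uniquely restricted matching in $G$.
   Context: Graphs are finite, simple, undirected. A permutation graph is a graph isomorphic to some $G_\pi$, where for a permutation $\pi$ of $\{1,\dots,n\}$, $G_\pi$ has vertex set $\{1,\dots,n\}$ and edges $ij$ with $(i-j)(\pi(i)-\pi(j))<0$; a bipartite permutation graph is a permutation graph that is bipartite. An ordering $<$ of $V(G)$ is a transitive vertex ordering if for all $u<v<w$: (a) $uv,vw\in E(G)$ implies $uw\in E(G)$, and (b) $uw\in E(G)$ implies $uv\in E(G)$ or $vw\in E(G)$. For an edge $e=uv$, $l(e)=\min_<\{u,v\}$ and $r(e)=\max_<\{u,v\}$. A matching is a set of pairwise vertex-disjoint edges; it is uniquely restricted if no other matching of $G$ matches exactly the same vertex set. *)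

theory Defs
  imports Main
begin

definition simple_graph :: "'a set \<Rightarrow> 'a set set \<Rightarrow> bool" where
  "simple_graph V Es \<longleftrightarrow> finite V \<and>
     (\<forall>e\<in>Es. \<exists>u v. e = {u, v} \<and> u \<noteq> v \<and> u \<in> V \<and> v \<in> V)"

definition perm_graph_edges :: "nat \<Rightarrow> (nat \<Rightarrow> nat) \<Rightarrow> nat set set" where
  "perm_graph_edges n \<pi> = {{i, j} | i j. i \<in> {1..n} \<and> j \<in> {1..n} \<and>
      (int i - int j) * (int (\<pi> i) - int (\<pi> j)) < 0}"

definition permutation_graph :: "'a set \<Rightarrow> 'a set set \<Rightarrow> bool" where
  "permutation_graph V Es \<longleftrightarrow> (\<exists>n \<pi> \<phi>. bij_betw \<pi> {1..n} {1..n} \<and>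
      bij_betw \<phi> V {1..n} \<and>
      (\<forall>u\<in>V. \<forall>v\<in>V. {u, v} \<in> Es \<longleftrightarrow> {\<phi> u, \<phi> v} \<in> perm_graph_edges n \<pi>))"

definition bipartite :: "'a set \<Rightarrow> 'a set set \<Rightarrow> bool" where
  "bipartite V Es \<longleftrightarrow> (\<exists>A B. A \<union> B = V \<and> A \<inter> B = {} \<and>
      (\<forall>e\<in>Es. \<exists>a\<in>A. \<exists>b\<in>B. e = {a, b}))"

definition bipartite_permutation_graph :: "'a set \<Rightarrow> 'a set set \<Rightarrow> bool" where
  "bipartite_permutation_graph V Es \<longleftrightarrow>
     simple_graph V Es \<and> permutation_graph V Es \<and> bipartite V Es"

definition linear_order_on_set :: "'a set \<Rightarrow> ('a \<Rightarrow> 'a \<Rightarrow> bool) \<Rightarrow> bool" where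
  "linear_order_on_set V lt \<longleftrightarrow>
     (\<forall>u\<in>V. \<not> lt u u) \<and>
     (\<forall>u\<in>V. \<forall>v\<in>V. \<forall>w\<in>V. lt u v \<longrightarrow> lt v w \<longrightarrow> lt u w) \<and>
     (\<forall>u\<in>V. \<forall>v\<in>V. u \<noteq> v \<longrightarrow> lt u v \<or> lt v u)"

definition transitive_vertex_ordering :: "'a set \<Rightarrow> 'a set set \<Rightarrow> ('a \<Rightarrow> 'a \<Rightarrow> bool) \<Rightarrow> bool" where
  "transitive_vertex_ordering V Es lt \<longleftrightarrow> linear_order_on_set V lt \<and>
     (\<forall>u\<in>V. \<forall>v\<in>V. \<forall>w\<in>V. lt u v \<longrightarrow> lt v w \<longrightarrow>
        ({u, v} \<in> Es \<longrightarrow> {v, w} \<in> Es \<longrightarrow> {u, w} \<in> Es) \<and>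
        ({u, w} \<in> Es \<longrightarrow> {u, v} \<in> Es \<or> {v, w} \<in> Es))"

definition matching :: "'a set set \<Rightarrow> 'a set set \<Rightarrow> bool" where
  "matching Es M \<longleftrightarrow> M \<subseteq> Es \<and> (\<forall>e\<in>M. \<forall>e'\<in>M. e \<noteq> e' \<longrightarrow> e \<inter> e' = {})"

definition uniquely_restricted_matching :: "'a set set \<Rightarrow> 'a set set \<Rightarrow> bool" where
  "uniquely_restricted_matching Es M \<longleftrightarrow> matching Es M \<and>
     (\<forall>M'. matching Es M' \<and> \<Union>M' = \<Union>M \<longrightarrow> M' = M)"

end

theory Submission
  imports Defs
begin

text \<open>Two disjoint edges \<open>ab\<close>, \<open>cd\<close> cover four vertices, and the only other perfect matchings
  of these four vertices are \<open>{ac, bd}\<close> and \<open>{ad, bc}\<close>; so \<open>{ab, cd}\<close> is uniquely restricted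
  iff neither of them lies in the graph. In each of the three relative positions of the two
  edges, triangle-freeness (a consequence of bipartiteness) together with the two axioms of a
  transitive ordering decides which of these alternatives can occur.\<close>

lemma matching_edge: "matching Es M \<Longrightarrow> e \<in> M \<Longrightarrow> e \<in> Es"
  unfolding matching_def by blast

lemma matching_disjoint: "matching Es M \<Longrightarrow> e \<in> M \<Longrightarrow> e' \<in> M \<Longrightarrow> e \<noteq> e' \<Longrightarrow> e \<inter> e' = {}"
  unfolding matching_def by blast

lemma matching_two_disjoint_edges:
  "{p, q} \<inter> {r, s} = {} \<Longrightarrow> {p, q} \<in> Es \<Longrightarrow> {r, s} \<in> Es \<Longrightarrow> matching Es {{p, q}, {r, s}}"
  unfolding matching_def by auto

lemma matching_covering_four_eq:
  assumes dist: "distinct [w, x, y, z]"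
    and two: "\<forall>e\<in>Es. \<exists>u v. e = {u, v} \<and> u \<noteq> v"
    and M: "matching Es M" "\<Union>M = {w, x, y, z}" "{w, x} \<in> M"
  shows "M = {{w, x}, {y, z}}"
proof -
  have other: "e = {y, z}" if "e \<in> M" "e \<noteq> {w, x}" for e
  proof -
    obtain u v where e: "e = {u, v}" "u \<noteq> v"
      using two matching_edge[OF M(1) \<open>e \<in> M\<close>] by blast
    have "e \<inter> {w, x} = {}"
      using matching_disjoint[OF M(1) that(1) M(3) that(2)] .
    moreover have "e \<subseteq> {w, x, y, z}"
      using M(2) that(1) by blast
    ultimately have "u \<in> {y, z}" "v \<in> {y, z}" using e(1) by auto
    then show ?thesis using e by auto
  qed
  have "y \<in> \<Union>M" using M(2) by simp
  then obtain e where "e \<in> M" "y \<in> e" by blast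
  moreover have "y \<notin> {w, x}" using dist by auto
  ultimately have "{y, z} \<in> M" using other by metis
  then show ?thesis using other M(3) by blast
qed

lemma matchings_covering_four:
  assumes dist: "distinct [a, b, c, d]"
    and two: "\<forall>e\<in>Es. \<exists>u v. e = {u, v} \<and> u \<noteq> v"
    and M: "matching Es M" "\<Union>M = {a, b, c, d}"
  shows "M = {{a, b}, {c, d}} \<or> M = {{a, c}, {b, d}} \<or> M = {{a, d}, {b, c}}"
proof -
  have "a \<in> \<Union>M" using M(2) by simp
  then obtain e where e: "e \<in> M" "a \<in> e" by blast
  obtain u v where "e = {u, v}" "u \<noteq> v"
    using two matching_edge[OF M(1) e(1)] by blast
  then have "\<exists>v. e = {a, v} \<and> v \<noteq> a"
    using e(2) by (auto simp: insert_commute)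
  then obtain v where v: "e = {a, v}" "v \<noteq> a" by blast
  have "v \<in> {a, b, c, d}" using M(2) e(1) v(1) by blast
  then have "{a, b} \<in> M \<or> {a, c} \<in> M \<or> {a, d} \<in> M"
    using e(1) v by auto
  then show ?thesis
  proof (elim disjE)
    assume "{a, b} \<in> M"
    from matching_covering_four_eq[OF dist two M this] show ?thesis ..
  next
    assume "{a, c} \<in> M"
    moreover have "distinct [a, c, b, d]" "\<Union>M = {a, c, b, d}" using dist M(2) by auto
    ultimately have "M = {{a, c}, {b, d}}"
      using matching_covering_four_eq[OF _ two M(1)] by blast
    then show ?thesis by simp
  next
    assume "{a, d} \<in> M"
    moreover have "distinct [a, d, b, c]" "\<Union>M = {a, d, b, c}" using dist M(2) by auto
    ultimately have "M = {{a, d}, {b, c}}"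
      using matching_covering_four_eq[OF _ two M(1)] by blast
    then show ?thesis by simp
  qed
qed

lemma uniquely_restricted_two_edges_iff:
  assumes dist: "distinct [a, b, c, d]"
    and two: "\<forall>e\<in>Es. \<exists>u v. e = {u, v} \<and> u \<noteq> v"
    and edges: "{a, b} \<in> Es" "{c, d} \<in> Es"
  shows "uniquely_restricted_matching Es {{a, b}, {c, d}} \<longleftrightarrow>
    \<not> ({a, c} \<in> Es \<and> {b, d} \<in> Es) \<and> \<not> ({a, d} \<in> Es \<and> {b, c} \<in> Es)"
proof
  assume unique: "uniquely_restricted_matching Es {{a, b}, {c, d}}"
  have no_rival: "\<not> matching Es M"
    if "\<Union>M = {a, b, c, d}" "M \<noteq> {{a, b}, {c, d}}" for M
  proof
    assume "matching Es M"
    moreover have "\<Union>M = \<Union>{{a, b}, {c, d}}" using that(1) by auto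
    ultimately show False
      using unique that(2) unfolding uniquely_restricted_matching_def by blast
  qed
  have "\<not> matching Es {{a, c}, {b, d}}"
    by (rule no_rival) (use dist in \<open>auto simp: doubleton_eq_iff\<close>)
  moreover have "\<not> matching Es {{a, d}, {b, c}}"
    by (rule no_rival) (use dist in \<open>auto simp: doubleton_eq_iff\<close>)
  ultimately show "\<not> ({a, c} \<in> Es \<and> {b, d} \<in> Es) \<and> \<not> ({a, d} \<in> Es \<and> {b, c} \<in> Es)"
    using matching_two_disjoint_edges[of a c b d Es] matching_two_disjoint_edges[of a d b c Es]
      dist by auto
next
  assume no_swap: "\<not> ({a, c} \<in> Es \<and> {b, d} \<in> Es) \<and> \<not> ({a, d} \<in> Es \<and> {b, c} \<in> Es)"
  have "M = {{a, b}, {c, d}}" if M: "matching Es M" "\<Union>M = {a, b, c, d}" for M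
  proof -
    have "M \<noteq> {{a, c}, {b, d}}" "M \<noteq> {{a, d}, {b, c}}"
      using no_swap matching_edge[OF M(1)] by auto
    with matchings_covering_four[OF dist two M] show ?thesis by simp
  qed
  moreover have "matching Es {{a, b}, {c, d}}"
    by (rule matching_two_disjoint_edges) (use edges dist in auto)
  moreover have "\<Union>{{a, b}, {c, d}} = {a, b, c, d}" by auto
  ultimately show "uniquely_restricted_matching Es {{a, b}, {c, d}}"
    unfolding uniquely_restricted_matching_def by metis
qed

lemma bipartite_no_triangle:
  assumes "bipartite V Es" "{x, y} \<in> Es" "{y, z} \<in> Es" "{x, z} \<in> Es"
  shows False
proof -
  obtain A B where AB: "A \<inter> B = {}" "\<forall>e\<in>Es. \<exists>a\<in>A. \<exists>b\<in>B. e = {a, b}"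
    using assms(1) unfolding bipartite_def by blast
  have sides: "p \<in> A \<longleftrightarrow> q \<notin> A" if "{p, q} \<in> Es" for p q
    using AB that by (fastforce simp: doubleton_eq_iff)
  show False using sides assms(2-4) by blast
qed

context
  fixes V :: "'a set" and Es :: "'a set set" and lt :: "'a \<Rightarrow> 'a \<Rightarrow> bool"
  assumes simple: "simple_graph V Es"
    and bip: "bipartite V Es"
    and ord: "transitive_vertex_ordering V Es lt"
begin

lemma edges_doubletons: "\<forall>e\<in>Es. \<exists>u v. e = {u, v} \<and> u \<noteq> v"
  using simple unfolding simple_graph_def by blast

lemma edge_in_vertices:
  assumes "{u, v} \<in> Es"
  shows "u \<in> V" "v \<in> V"
  using simple assms unfolding simple_graph_def by (auto simp: doubleton_eq_iff)

lemma lt_trans: "u \<in> V \<Longrightarrow> v \<in> V \<Longrightarrow> w \<in> V \<Longrightarrow> lt u v \<Longrightarrow> lt v w \<Longrightarrow> lt u w"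
  using ord unfolding transitive_vertex_ordering_def linear_order_on_set_def by blast

lemma lt_imp_neq: "u \<in> V \<Longrightarrow> lt u v \<Longrightarrow> u \<noteq> v"
  using ord unfolding transitive_vertex_ordering_def linear_order_on_set_def by blast

lemma lt_chain_distinct:
  assumes "p \<in> V" "q \<in> V" "r \<in> V" "s \<in> V" "lt p q" "lt q r" "lt r s"
  shows "distinct [p, q, r, s]"
proof -
  have "lt p r" "lt p s" "lt q s" using assms lt_trans by blast+
  then show ?thesis using assms lt_imp_neq by auto
qed

lemma edge_trans:
  "u \<in> V \<Longrightarrow> v \<in> V \<Longrightarrow> w \<in> V \<Longrightarrow> lt u v \<Longrightarrow> lt v w \<Longrightarrow> {u, v} \<in> Es \<Longrightarrow> {v, w} \<in> Es
    \<Longrightarrow> {u, w} \<in> Es"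
  using ord unfolding transitive_vertex_ordering_def by blast

lemma edge_split:
  "u \<in> V \<Longrightarrow> v \<in> V \<Longrightarrow> w \<in> V \<Longrightarrow> lt u v \<Longrightarrow> lt v w \<Longrightarrow> {u, w} \<in> Es
    \<Longrightarrow> {u, v} \<in> Es \<or> {v, w} \<in> Es"
  using ord unfolding transitive_vertex_ordering_def by blast

lemma no_triangle: "{x, y} \<in> Es \<Longrightarrow> {y, z} \<in> Es \<Longrightarrow> {x, z} \<in> Es \<Longrightarrow> False"
  using bipartite_no_triangle[OF bip] .

lemma disjoint_edges_uniquely_restricted:
  assumes e: "{a, b} \<in> Es" and e': "{c, d} \<in> Es"
    and order: "lt a b" "lt b c" "lt c d"
  shows "uniquely_restricted_matching Es {{a, b}, {c, d}}"
proof -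
  have V: "a \<in> V" "b \<in> V" "c \<in> V" "d \<in> V" using edge_in_vertices e e' by auto
  have "lt b d" using order V lt_trans by blast
  have "\<not> ({a, c} \<in> Es \<and> {b, d} \<in> Es)"
    using edge_trans[OF V(1,2,4) \<open>lt a b\<close> \<open>lt b d\<close> e] no_triangle[of a b d] e by blast
  moreover have "\<not> ({a, d} \<in> Es \<and> {b, c} \<in> Es)"
    using edge_trans[OF V(1,2,3) order(1,2) e] no_triangle[of a b c] e by blast
  ultimately show ?thesis
    using uniquely_restricted_two_edges_iff[OF lt_chain_distinct[OF V order] edges_doubletons e e']
    by blast
qed

lemma crossing_edges_uniquely_restricted_iff:
  assumes e: "{a, b} \<in> Es" and e': "{c, d} \<in> Es"
    and order: "lt a c" "lt c b" "lt b d"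
  shows "uniquely_restricted_matching Es {{a, b}, {c, d}} \<longleftrightarrow> {a, d} \<notin> Es"
proof -
  have V: "a \<in> V" "b \<in> V" "c \<in> V" "d \<in> V" using edge_in_vertices e e' by auto
  have "lt c d" using order V lt_trans by blast
  have "distinct [a, b, c, d]" using lt_chain_distinct[OF V(1,3,2,4) order] by auto
  moreover have "\<not> ({a, c} \<in> Es \<and> {b, d} \<in> Es)"
    using edge_trans[OF V(1,3,4) \<open>lt a c\<close> \<open>lt c d\<close> _ e'] no_triangle[of a c d] e' by blast
  moreover have "{b, c} \<in> Es" if "{a, d} \<in> Es"
    using edge_split[OF V(3,2,4) order(2,3) e'] no_triangle[of a b d] e that
    by (auto simp: insert_commute)
  ultimately show ?thesis
    using uniquely_restricted_two_edges_iff[OF _ edges_doubletons e e'] by blast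
qed

lemma nested_edges_not_uniquely_restricted:
  assumes e: "{a, b} \<in> Es" and e': "{c, d} \<in> Es"
    and order: "lt a c" "lt c d" "lt d b"
  shows "\<not> uniquely_restricted_matching Es {{a, b}, {c, d}}"
proof -
  have V: "a \<in> V" "b \<in> V" "c \<in> V" "d \<in> V" using edge_in_vertices e e' by auto
  have "lt a d" "lt c b" using order V lt_trans by blast+
  have "{a, c} \<in> Es \<or> {c, b} \<in> Es" "{a, d} \<in> Es \<or> {d, b} \<in> Es"
    using edge_split[OF V(1,3,2) order(1) \<open>lt c b\<close> e] edge_split[OF V(1,4,2) \<open>lt a d\<close> order(3) e] .
  moreover have "\<not> ({a, c} \<in> Es \<and> {a, d} \<in> Es)" "\<not> ({b, c} \<in> Es \<and> {b, d} \<in> Es)"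
    using no_triangle[of a c d] no_triangle[of c d b] e' by (auto simp: insert_commute)
  ultimately have "({a, c} \<in> Es \<and> {b, d} \<in> Es) \<or> ({a, d} \<in> Es \<and> {b, c} \<in> Es)"
    by (auto simp: insert_commute)
  moreover have "distinct [a, b, c, d]" using lt_chain_distinct[OF V(1,3,4,2) order] by auto
  ultimately show ?thesis
    using uniquely_restricted_two_edges_iff[OF _ edges_doubletons e e'] by blast
qed

end

theorem lemma7:
  fixes V :: "'a set" and Es :: "'a set set" and lt :: "'a \<Rightarrow> 'a \<Rightarrow> bool"
    and a b c d :: 'a
  assumes G: "bipartite_permutation_graph V Es"
    and ord: "transitive_vertex_ordering V Es lt"
    and e: "{a, b} \<in> Es" and ab: "lt a b"
    and e': "{c, d} \<in> Es" and cd: "lt c d"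
    and ac: "lt a c"
  shows "(lt b c \<longrightarrow> uniquely_restricted_matching Es {{a, b}, {c, d}})
       \<and> (lt c b \<and> lt b d \<longrightarrow>
            (uniquely_restricted_matching Es {{a, b}, {c, d}} \<longleftrightarrow> {a, d} \<notin> Es))
       \<and> (lt d b \<longrightarrow> \<not> uniquely_restricted_matching Es {{a, b}, {c, d}})"
proof -
  have simple: "simple_graph V Es" and bip: "bipartite V Es"
    using G unfolding bipartite_permutation_graph_def by auto
  show ?thesis
    using disjoint_edges_uniquely_restricted[OF simple bip ord e e' ab _ cd]
      crossing_edges_uniquely_restricted_iff[OF simple bip ord e e' ac]
      nested_edges_not_uniquely_restricted[OF simple bip ord e e' ac cd]
    by blast
qed

end
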